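(* Let $a,b$ be non-negative integers and $c=1$ such that $x^3-ax^2-bx-c$ has exactly one real root $\eta_1$, with $\eta_1>1$, and non-real roots $\eta_2$, $\eta_3=\overline{\eta_2}$. Let $\psi_2,\zeta_2$ be the complex constants such that for every $n\ge 3$ and all $k,l$, every sequence $\langle x_i\rangle_{i=1}^n$ satisfying $x_{i+3}=ax_{i+2}+bx_{i+1}+cx_i$ with $x_n=0$, $x_{n-1}=k$, $x_{n-2}=l$ is given by $x_i=\sum_{j=1}^3(k\psi_j+l\zeta_j)\eta_j^{n-i}$ for some constants $\psi_1,\zeta_1$ and $\psi_3=\overline{\psi_2}$, $\zeta_3=\overline{\zeta_2}$. For integers $k,l$ with $k\psi_2+l\zeta_2\neq 0$, let $\gamma(k,l)\in[0,2\pi)$ be the argument of $k\psi_2+l\zeta_2$. Then for any real $x<y$ with $[x,y]\subseteq[0,2\pi]$, there exist non-zero integers $k,l$ with $k\psi_2+l\zeta_2\neq0$ and $x<\gamma(k,l)<y$.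
   Context: The roots of the polynomial are distinct, so the constants $\psi_j,\zeta_j$ are uniquely determined by the polynomial. *)

theory Defs
  imports "HOL-Analysis.Analysis"
begin

text \<open>The argument of a non-zero complex number, normalised to lie in [0, 2 pi).
  (Isabelle's Arg takes values in (-pi, pi].)\<close>
definition arg02pi :: "complex \<Rightarrow> real" where
  "arg02pi z = (if 0 \<le> Arg z then Arg z else Arg z + 2 * pi)"

end

theory Submission
  imports Defs
begin

(* Solving the Vandermonde system that defines psi and zeta (Cramer's rule on the middle
   column) gives zeta_2 = 1 / ((eta_2 - eta_1)(eta_2 - eta_3)) and psi_2 = -(eta_1 + eta_3) zeta_2.
   Hence k psi_2 + l zeta_2 = (k w + l) zeta_2 with w = -(eta_1 + eta_3) non-real, since
   eta_1 is real and eta_3 = conj eta_2 is not. So Z w + Z is a lattice, and every point of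
   the plane lies within |w| + 1 of some k w + l with k, l both non-zero. Taking the point
   far out along the ray of the desired direction, its argument is as close to that
   direction as we like. *)

lemma arg02pi_eq_Arg2pi: "arg02pi z = Arg2pi z"
proof (cases "z = 0")
  case True
  then show ?thesis by (simp add: arg02pi_def Arg_zero)
next
  case False
  have "of_real (cmod z) * exp (\<i> * of_real (arg02pi z)) = z"
    using False Arg_eq[of z] by (simp add: arg02pi_def algebra_simps exp_add)
  moreover have "0 \<le> arg02pi z" "arg02pi z < 2 * pi"
    using Arg_bounded[of z] by (auto simp: arg02pi_def)
  ultimately show ?thesis
    using False by (simp add: Arg2pi_unique)
qed

lemma Arg2pi_cis: "0 \<le> m \<Longrightarrow> m < 2 * pi \<Longrightarrow> Arg2pi (cis m) = m"
  by (simp add: cis_conv_exp Arg2pi_exp)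

lemma Arg2pi_near_ray:
  fixes m h C :: real
  assumes m: "0 < m" "m < 2 * pi" and h: "h > 0"
  obtains R where "R > C"
    "\<And>z. cmod (z - of_real R * cis m) \<le> C \<Longrightarrow> z \<noteq> 0 \<and> \<bar>Arg2pi z - m\<bar> < h"
proof -
  \<comment> \<open>\<open>0 < m < 2\<pi>\<close> keeps the ray off the branch cut of \<open>Arg2pi\<close>, where it is discontinuous.\<close>
  have "cis m \<notin> \<real>\<^sub>\<ge>\<^sub>0"
    using m Arg2pi_eq_0[of "cis m"] by (auto simp: Arg2pi_cis complex_nonneg_Reals_iff complex_is_Real_iff)
  then have "continuous (at (cis m)) Arg2pi"
    by (rule continuous_at_Arg2pi)
  then obtain e where e: "e > 0" "\<And>u. dist u (cis m) < e \<Longrightarrow> dist (Arg2pi u) m < h"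
    unfolding continuous_at_eps_delta using h m by (auto simp: Arg2pi_cis)
  define R where "R = \<bar>C\<bar> / e + \<bar>C\<bar> + 1"
  have "\<bar>C\<bar> / e \<ge> 0"
    using e by simp
  then have R: "R > C" "R > 0"
    by (auto simp: R_def)
  have "\<bar>C\<bar> < e * R"
    using e by (simp add: R_def distrib_left add_nonneg_pos)
  then have R_small: "\<bar>C\<bar> / R < e"
    using R by (simp add: pos_divide_less_eq mult.commute)
  show thesis
  proof (rule that[OF R(1)])
    fix z assume z: "cmod (z - of_real R * cis m) \<le> C"
    then have "z \<noteq> 0"
      using R by (auto simp: norm_mult)
    have "z / of_real R - cis m = (z - of_real R * cis m) / of_real R"
      using R by (simp add: field_simps)
    then have "dist (z / of_real R) (cis m) \<le> \<bar>C\<bar> / R"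
      using z R by (simp add: dist_norm norm_divide divide_right_mono)
    then have "dist (Arg2pi (z / of_real R)) m < h"
      using R_small e(2) by simp
    then show "z \<noteq> 0 \<and> \<bar>Arg2pi z - m\<bar> < h"
      using R \<open>z \<noteq> 0\<close> by (simp add: dist_real_def)
  qed
qed

lemma exists_nonzero_int_near:
  fixes s :: real
  shows "\<exists>k::int. k \<noteq> 0 \<and> \<bar>of_int k - s\<bar> \<le> 1"
proof (cases "s \<ge> 0")
  case True
  then show ?thesis
    by (intro exI[of _ "\<lfloor>s\<rfloor> + 1"]) linarith
next
  case False
  then show ?thesis
    by (intro exI[of _ "\<lceil>s\<rceil> - 1"]) linarith
qed

lemma nonzero_lattice_point_near:
  assumes "Im w \<noteq> 0"
  shows "\<exists>k l :: int. k \<noteq> 0 \<and> l \<noteq> 0 \<and> cmod (of_int k * w + of_int l - T) \<le> cmod w + 1"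
proof -
  define s where "s = Im T / Im w"
  define t where "t = Re T - s * Re w"
  have T: "T = of_real s * w + of_real t"
    using assms by (intro complex_eqI) (simp_all add: s_def t_def)
  obtain k l :: int where k: "k \<noteq> 0" "\<bar>of_int k - s\<bar> \<le> 1" and l: "l \<noteq> 0" "\<bar>of_int l - t\<bar> \<le> 1"
    using exists_nonzero_int_near by meson
  have "cmod (of_int k * w + of_int l - T) = cmod (of_real (of_int k - s) * w + of_real (of_int l - t))"
    by (simp add: T algebra_simps)
  also have "\<dots> \<le> \<bar>of_int k - s\<bar> * cmod w + \<bar>of_int l - t\<bar>"
    by (metis norm_mult norm_of_real norm_triangle_ineq)
  also have "\<dots> \<le> cmod w + 1"
    using k(2) l(2) by (intro add_mono mult_left_le_one_le) auto
  finally show ?thesis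
    using k(1) l(1) by blast
qed

lemma lattice_Arg2pi_dense:
  fixes p q :: complex and x y :: real
  assumes q: "q \<noteq> 0" and independent: "Im (p / q) \<noteq> 0" and xy: "0 \<le> x" "x < y" "y \<le> 2 * pi"
  shows "\<exists>k l :: int. k \<noteq> 0 \<and> l \<noteq> 0 \<and> of_int k * p + of_int l * q \<noteq> 0 \<and>
    x < Arg2pi (of_int k * p + of_int l * q) \<and> Arg2pi (of_int k * p + of_int l * q) < y"
proof -
  define m where "m = (x + y) / 2"
  define h where "h = (y - x) / 2"
  have m: "0 < m" "m < 2 * pi" and h: "h > 0"
    using xy by (auto simp: m_def h_def)
  define w where "w = p / q"
  obtain R where R: "R > (cmod w + 1) * cmod q"
    and near: "\<And>z. cmod (z - of_real R * cis m) \<le> (cmod w + 1) * cmod q \<Longrightarrow> z \<noteq> 0 \<and> \<bar>Arg2pi z - m\<bar> < h"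
    using Arg2pi_near_ray[OF m h] by metis
  obtain k l :: int where kl: "k \<noteq> 0" "l \<noteq> 0"
    and close: "cmod (of_int k * w + of_int l - of_real R * cis m / q) \<le> cmod w + 1"
    using nonzero_lattice_point_near[OF independent[folded w_def]] by blast
  define z where "z = of_int k * p + of_int l * q"
  have "z - of_real R * cis m = (of_int k * w + of_int l - of_real R * cis m / q) * q"
    using q by (simp add: z_def w_def field_simps)
  then have "cmod (z - of_real R * cis m) \<le> (cmod w + 1) * cmod q"
    using close by (simp add: norm_mult mult_right_mono)
  then have "z \<noteq> 0" "\<bar>Arg2pi z - m\<bar> < h"
    using near by auto
  moreover have "m - h = x" "m + h = y"
    by (simp_all add: m_def h_def field_simps)
  ultimately have "z \<noteq> 0" "x < Arg2pi z" "Arg2pi z < y"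
    by auto
  then show ?thesis
    using kl unfolding z_def by blast
qed


lemma vandermonde3_middle_coeff:
  fixes p e :: "nat \<Rightarrow> 'a::comm_ring_1"
  shows "p 2 * ((e 2 - e 1) * (e 2 - e 3)) =
    (\<Sum>j\<in>{1,2,3}. p j * e j ^ 2) - (e 1 + e 3) * (\<Sum>j\<in>{1,2,3}. p j * e j) + e 1 * e 3 * (\<Sum>j\<in>{1,2,3}. p j)"
  by (simp add: algebra_simps power2_eq_square)

theorem corollary3:
  fixes a b :: nat
    and eta1 :: real
    and eta psi zeta :: "nat \<Rightarrow> complex"
    and x y :: real
  assumes c_one: "c = (1::nat)"
    and root1: "eta1 ^ 3 - real a * eta1 ^ 2 - real b * eta1 - real c = 0"
    and eta1_gt: "eta1 > 1"
    and unique_real_root: "\<forall>t::real. t ^ 3 - real a * t ^ 2 - real b * t - real c = 0 \<longrightarrow> t = eta1"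
    and eta_1: "eta 1 = complex_of_real eta1"
    and root2: "eta 2 ^ 3 - of_nat a * eta 2 ^ 2 - of_nat b * eta 2 - of_nat c = 0"
    and eta2_nonreal: "Im (eta 2) \<noteq> 0"
    and eta_3: "eta 3 = cnj (eta 2)"
    and psi_3: "psi 3 = cnj (psi 2)"
    and zeta_3: "zeta 3 = cnj (zeta 2)"
    and seq: "\<forall>n\<ge>3. \<forall>k l :: complex. \<forall>X :: nat \<Rightarrow> complex.
               (X n = 0 \<and> X (n - 1) = k \<and> X (n - 2) = l \<and>
                (\<forall>i. 1 \<le> i \<and> i + 3 \<le> n \<longrightarrow>
                   X i = of_nat a * X (i + 1) + of_nat b * X (i + 2) + of_nat c * X (i + 3)))
               \<longrightarrow> (\<forall>i\<in>{1..n}. X i = (\<Sum>j\<in>{1,2,3}. (k * psi j + l * zeta j) * eta j ^ (n - i)))"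
    and xy: "x < y" "0 \<le> x" "y \<le> 2 * pi"
  shows "\<exists>k l :: int. k \<noteq> 0 \<and> l \<noteq> 0 \<and>
           of_int k * psi 2 + of_int l * zeta 2 \<noteq> 0 \<and>
           x < arg02pi (of_int k * psi 2 + of_int l * zeta 2) \<and>
           arg02pi (of_int k * psi 2 + of_int l * zeta 2) < y"
proof -
  \<comment> \<open>For \<open>n = 3\<close> the recurrence constraint is vacuous, so \<open>seq\<close> says that \<open>psi\<close> and \<open>zeta\<close>
    solve the Vandermonde systems with right-hand sides \<open>(0,1,0)\<close> and \<open>(0,0,1)\<close>.\<close>
  have solution_at_3: "\<forall>i\<in>{1..3}. (if i = 3 then 0 else if i = 2 then k else l) =
      (\<Sum>j\<in>{1,2,3}. (k * psi j + l * zeta j) * eta j ^ (3 - i))" for k l :: complex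
    using seq[rule_format, of 3 "\<lambda>i. if i = 3 then 0 else if i = 2 then k else l" k l] by auto
  have sys: "0 = (\<Sum>j\<in>{1,2,3}. k * psi j + l * zeta j)"
      "k = (\<Sum>j\<in>{1,2,3}. (k * psi j + l * zeta j) * eta j)"
      "l = (\<Sum>j\<in>{1,2,3}. (k * psi j + l * zeta j) * eta j ^ 2)" for k l :: complex
    using solution_at_3[of k l] by (auto dest: bspec[of _ _ 1] bspec[of _ _ 2] bspec[of _ _ 3])
  define D where "D = (eta 2 - eta 1) * (eta 2 - eta 3)"
  have zeta_D: "zeta 2 * D = 1"
    using vandermonde3_middle_coeff[of zeta eta] sys[where k = 0 and l = 1] by (simp add: D_def)
  have psi_D: "psi 2 * D = - (eta 1 + eta 3)"
    using vandermonde3_middle_coeff[of psi eta] sys[where k = 1 and l = 0] by (simp add: D_def)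
  have zeta_nz: "zeta 2 \<noteq> 0"
    using zeta_D by auto
  have "psi 2 / zeta 2 = psi 2 * D"
    using zeta_D by (simp add: divide_inverse inverse_unique)
  then have "psi 2 / zeta 2 = - (eta 1 + eta 3)"
    using psi_D by simp
  then have "Im (psi 2 / zeta 2) \<noteq> 0"
    using eta2_nonreal eta_1 eta_3 by simp
  from lattice_Arg2pi_dense[OF zeta_nz this xy(2,1,3)] show ?thesis
    unfolding arg02pi_eq_Arg2pi .
qed

end
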